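(* Let $0<\alpha\leq2$, let $X$ be a scalar symmetric $\alpha$-stable Lévy process with $X_0=0$ and $\mathbb{E}[e^{iuX_t}]=e^{-|u|^\alpha t}$, let $T>0$, $n\in\mathbb{N}$, $\Delta_n=T/n$, $t_k=k\Delta_n$, $\mathcal{O}_T(0)=\int_0^T\mathbf{1}(X_t\geq0)dt$ and $\hat{\mathcal{O}}_{T,n}(0)=\Delta_n\sum_{k=1}^n\mathbf{1}(X_{t_{k-1}}\geq0)$. Let $Z,\tilde Z$ be independent with characteristic function $e^{-|u|^\alpha}$, $D=(1+|\tilde Z/Z|^\alpha)^{-1}$ and $\psi(x)=(x-\lfloor x\rfloor)-(x-\lfloor x\rfloor)^2$. Then \[ 2\,\mathbb{E}[\mathcal{O}_T(0)\hat{\mathcal{O}}_{T,n}(0)]=\frac34T^2+\frac38T\Delta_n-\frac18\Delta_n^2\,\mathbb{E}\Bigl[\frac{\psi(nD)}{D(1-D)}\Bigr]. \] *)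

theory Defs
  imports "HOL-Probability.Probability"
begin

definition sym_stable_levy :: "'a measure \<Rightarrow> real \<Rightarrow> (real \<Rightarrow> 'a \<Rightarrow> real) \<Rightarrow> bool" where
  "sym_stable_levy M \<alpha> X \<longleftrightarrow>
     prob_space M \<and>
     (\<forall>\<omega>\<in>space M. X 0 \<omega> = 0) \<and>
     (\<forall>t\<ge>0. X t \<in> borel_measurable M) \<and>
     (\<forall>(ts :: nat \<Rightarrow> real) k. 0 \<le> ts 0 \<and> (\<forall>i<k. ts i < ts (Suc i)) \<longrightarrow>
        prob_space.indep_vars M (\<lambda>_. borel) (\<lambda>i \<omega>. X (ts (Suc i)) \<omega> - X (ts i) \<omega>) {..<k}) \<and>
     (\<forall>s t u. 0 \<le> s \<and> s \<le> t \<longrightarrow>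
        char (distr M borel (\<lambda>\<omega>. X t \<omega> - X s \<omega>)) u
          = complex_of_real (exp (- (\<bar>u\<bar> powr \<alpha>) * (t - s)))) \<and>
     (\<forall>\<omega>\<in>space M. \<forall>t\<ge>0. continuous (at_right t) (\<lambda>s. X s \<omega>) \<and>
        (0 < t \<longrightarrow> (\<exists>l. ((\<lambda>s. X s \<omega>) \<longlongrightarrow> l) (at_left t))))"

definition psi :: "real \<Rightarrow> real" where
  "psi x = frac x - (frac x)\<^sup>2"

definition occ_time :: "(real \<Rightarrow> 'a \<Rightarrow> real) \<Rightarrow> real \<Rightarrow> 'a \<Rightarrow> real" where
  "occ_time X T \<omega> = (LBINT t:{0..T}. indicator {0..} (X t \<omega>))"

definition occ_est :: "(real \<Rightarrow> 'a \<Rightarrow> real) \<Rightarrow> real \<Rightarrow> nat \<Rightarrow> 'a \<Rightarrow> real" where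
  "occ_est X T n \<omega> = (T / real n) * (\<Sum>k=1..n. indicator {0..} (X (real (k - 1) * (T / real n)) \<omega>))"

end

theory Submission
  imports Defs
begin

text \<open>
  By Fubini, \<open>E[O\<^sub>T(0) \<cdot> O\<^sub>T\<^sub>,\<^sub>n(0)]\<close> is \<open>\<Delta> \<Sum>\<^sub>k \<integral>\<^sub>0\<^sup>T P(X\<^sub>t \<ge> 0, X(k\<Delta>) \<ge> 0) dt\<close>.
  For \<open>0 < u < v\<close> the pair \<open>(X\<^sub>u, X\<^sub>v - X\<^sub>u)\<close> has the law of \<open>(u\<^bsup>1/\<alpha>\<^esup> Z, (v - u)\<^bsup>1/\<alpha>\<^esup> Z')\<close>
  with \<open>Z, Z'\<close> independent standard symmetric stable. Changing the signs of \<open>Z\<close> and \<open>Z'\<close> does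
  not change this law, and of the four sign patterns exactly two or one make both values
  nonnegative, according as \<open>|X\<^sub>v - X\<^sub>u| \<le> |X\<^sub>u|\<close> or not. Hence
  \<open>P(X\<^sub>u \<ge> 0, X\<^sub>v \<ge> 0) = (1 + P(\<Theta> \<le> u/v)) / 4\<close>, where \<open>\<Theta> = 1 - D\<close>.
  Integrating in \<open>t\<close> turns the event into the length \<open>min T (u/\<Theta>) - u\<Theta>\<close> of the window of
  times \<open>t\<close> with \<open>\<Theta> \<le> min u t / max u t\<close>, and summing over the grid \<open>u = k\<Delta>\<close> is a floor
  computation that produces \<open>\<psi>(n\<Theta>)\<close>. Finally, the symmetry \<open>Z \<leftrightarrow> Z'\<close> exchanges \<open>\<Theta>\<close> and
  \<open>1 - \<Theta>\<close>; averaging the two expressions gives \<open>\<psi>(nD) / (D(1 - D))\<close>.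
\<close>

section \<open>Symmetric stable laws\<close>

lemma power_le_exp:
  fixes x :: real
  assumes "0 \<le> x" "0 < m"
  shows "x ^ m \<le> real m ^ m * exp x"
proof -
  have "x / m \<le> exp (x / m)"
    using exp_ge_add_one_self[of "x / m"] by linarith
  then have "(x / m) ^ m \<le> exp (x / m) ^ m"
    using assms by (intro power_mono) auto
  also have "\<dots> = exp x"
    using assms by (simp add: exp_of_nat_mult[symmetric])
  finally show ?thesis
    using assms by (simp add: power_divide field_simps)
qed

lemma square_mult_exp_neg_abs_powr_le:
  fixes \<alpha> t :: real
  assumes "0 < \<alpha>"
  defines "m \<equiv> nat \<lceil>2 / \<alpha>\<rceil> + 1"
  shows "t\<^sup>2 * exp (- (\<bar>t\<bar> powr \<alpha>)) \<le> 1 + real m ^ m"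
proof (cases "\<bar>t\<bar> \<le> 1")
  case True
  then have "t\<^sup>2 \<le> 1"
    by (simp add: abs_square_le_1)
  then have "t\<^sup>2 * exp (- (\<bar>t\<bar> powr \<alpha>)) \<le> 1"
    by (intro mult_le_one) auto
  moreover have "0 \<le> real m ^ m"
    by simp
  ultimately show ?thesis
    by linarith
next
  case False
  define x where "x = \<bar>t\<bar> powr \<alpha>"
  have m: "0 < m" "2 / \<alpha> \<le> real m"
    unfolding m_def by linarith+
  have "1 \<le> x"
    unfolding x_def using False assms by (simp add: ge_one_powr_ge_zero)
  have "t\<^sup>2 = \<bar>t\<bar> powr 2"
    using False by (simp add: powr_numeral)
  also have "\<dots> = x powr (2 / \<alpha>)"
    unfolding x_def using assms by (simp add: powr_powr)
  also have "\<dots> \<le> x ^ m"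
    using \<open>1 \<le> x\<close> m by (simp add: powr_realpow[symmetric] powr_mono)
  also have "\<dots> \<le> real m ^ m * exp x"
    using \<open>1 \<le> x\<close> m by (intro power_le_exp) auto
  finally have "t\<^sup>2 * exp (- x) \<le> real m ^ m * exp x * exp (- x)"
    by (intro mult_right_mono) auto
  also have "\<dots> = real m ^ m"
    by (simp add: exp_minus)
  finally show ?thesis
    unfolding x_def by linarith
qed

lemma exp_neg_abs_powr_le_inverse_square:
  fixes \<alpha> :: real
  assumes "0 < \<alpha>"
  obtains C where "\<And>t::real. exp (- (\<bar>t\<bar> powr \<alpha>)) \<le> C * inverse (1 + t\<^sup>2)"
proof
  fix t :: real
  define m where "m = nat \<lceil>2 / \<alpha>\<rceil> + 1"
  have "t\<^sup>2 * exp (- (\<bar>t\<bar> powr \<alpha>)) \<le> 1 + real m ^ m"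
    unfolding m_def using assms by (rule square_mult_exp_neg_abs_powr_le)
  moreover have "exp (- (\<bar>t\<bar> powr \<alpha>)) \<le> 1"
    by simp
  ultimately have "(1 + t\<^sup>2) * exp (- (\<bar>t\<bar> powr \<alpha>)) \<le> 2 + real m ^ m"
    unfolding distrib_right mult_1_left by linarith
  then show "exp (- (\<bar>t\<bar> powr \<alpha>)) \<le> (2 + real m ^ m) * inverse (1 + t\<^sup>2)"
    by (simp add: field_simps add_pos_nonneg)
qed

lemma integrable_exp_neg_abs_powr:
  fixes \<alpha> :: real
  assumes "0 < \<alpha>"
  shows "integrable lborel (\<lambda>t::real. exp (- (\<bar>t\<bar> powr \<alpha>)))"
proof -
  obtain C where C: "\<And>t::real. exp (- (\<bar>t\<bar> powr \<alpha>)) \<le> C * inverse (1 + t\<^sup>2)"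
    using exp_neg_abs_powr_le_inverse_square[OF assms] by blast
  have "integrable lborel (\<lambda>t::real. C * inverse (1 + t\<^sup>2))"
    using integrable_inverse_1_plus_square by (simp add: set_integrable_def)
  then show ?thesis
    by (rule Bochner_Integration.integrable_bound) (use C in \<open>auto intro!: AE_I2 intro: order_trans[OF _ abs_ge_self]\<close>)
qed

lemma char_distr_mult:
  assumes "real_distribution \<mu>"
  shows "char (distr \<mu> borel (\<lambda>x. c * x)) u = char \<mu> (c * u)"
  unfolding char_def using assms
  by (subst integral_distr) (auto simp: real_distribution_def real_distribution_axioms_def ac_simps)

lemma measure_Ioc_le_integral_char:
  assumes "real_distribution \<mu>" and int: "integrable lborel (\<lambda>t. cmod (char \<mu> t))"
    and "a \<le> b" "measure \<mu> {a} = 0" "measure \<mu> {b} = 0"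
  shows "measure \<mu> {a<..b} \<le> (b - a) * (\<integral>t. cmod (char \<mu> t) \<partial>lborel) / (2 * pi)"
proof -
  interpret real_distribution \<mu> by fact
  define K where "K = (\<integral>t. cmod (char \<mu> t) \<partial>lborel)"
  define G where "G t = (iexp (- (t * a)) - iexp (- (t * b))) / (\<i> * complex_of_real t) * char \<mu> t" for t
  have G: "norm (G t) \<le> (b - a) * cmod (char \<mu> t)" for t
  proof (cases "t = 0")
    case False
    then have "cmod ((iexp (- (t * a)) - iexp (- (t * b))) / (\<i> * complex_of_real t)) \<le> b - a"
      using Levy_Inversion_aux2[of "- b" "- a" t] \<open>a \<le> b\<close> by simp
    then show ?thesis
      unfolding G_def norm_mult by (simp add: mult_right_mono)
  qed (use \<open>a \<le> b\<close> in \<open>simp add: G_def\<close>)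
  have "norm (1 / (2 * pi) * (CLBINT t=- real T..real T. G t)) \<le> (b - a) * K / (2 * pi)" for T :: nat
  proof -
    have "norm (CLBINT t=- real T..real T. G t)
        = norm (\<integral>t. indicator (einterval (- real T) (real T)) t *\<^sub>R G t \<partial>lborel)"
      by (simp add: interval_lebesgue_integral_def set_lebesgue_integral_def)
    also have "\<dots> \<le> (\<integral>t. norm (indicator (einterval (- real T) (real T)) t *\<^sub>R G t) \<partial>lborel)"
      by (rule integral_norm_bound)
    also have "\<dots> \<le> (\<integral>t. (b - a) * cmod (char \<mu> t) \<partial>lborel)"
      using int G \<open>a \<le> b\<close> by (intro integral_mono') (auto simp: indicator_def)
    finally show ?thesis
      by (simp add: K_def norm_mult norm_divide divide_simps)
  qed
  moreover have "(\<lambda>T::nat. 1 / (2 * pi) * (CLBINT t=- real T..real T. G t))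
      \<longlonglongrightarrow> complex_of_real (measure \<mu> {a<..b})"
    using Levy_Inversion[OF assms(3-5)] unfolding G_def by simp
  ultimately have "norm (complex_of_real (measure \<mu> {a<..b})) \<le> (b - a) * K / (2 * pi)"
    by (intro LIMSEQ_le_const2[OF tendsto_norm]) auto
  then show ?thesis
    by (simp add: K_def)
qed

lemma measure_singleton_eq_0_if_integrable_char:
  assumes "real_distribution \<mu>" and int: "integrable lborel (\<lambda>t. cmod (char \<mu> t))"
  shows "measure \<mu> {x} = 0"
proof -
  interpret real_distribution \<mu> by fact
  define K where "K = (\<integral>t. cmod (char \<mu> t) \<partial>lborel)"
  have K: "0 \<le> K"
    unfolding K_def by (intro integral_nonneg_AE) auto
  have "measure \<mu> {x} \<le> \<epsilon>" if "0 < \<epsilon>" for \<epsilon>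
  proof -
    define d where "d = \<epsilon> * pi / (K + 1)"
    have "0 < d"
      unfolding d_def using \<open>0 < \<epsilon>\<close> K by (simp add: add_nonneg_pos)
    \<comment> \<open>atoms are countable, so non-atoms exist on both sides of x arbitrarily close to it\<close>
    obtain a where a: "a \<in> {x - d<..<x}" "measure \<mu> {a} = 0"
      using open_minus_countable[OF countable_support, of "{x - d<..<x}"] \<open>0 < d\<close> by auto
    obtain b where b: "b \<in> {x<..<x + d}" "measure \<mu> {b} = 0"
      using open_minus_countable[OF countable_support, of "{x<..<x + d}"] \<open>0 < d\<close> by auto
    have "measure \<mu> {x} \<le> measure \<mu> {a<..b}"
      using a b by (intro finite_measure_mono) auto
    also have "\<dots> \<le> (b - a) * K / (2 * pi)"
      unfolding K_def using a b by (intro measure_Ioc_le_integral_char[OF assms]) auto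
    also have "\<dots> \<le> (2 * d) * K / (2 * pi)"
      using a b K by (intro divide_right_mono mult_right_mono) auto
    also have "\<dots> = \<epsilon> * (K / (K + 1))"
      unfolding d_def using K by (simp add: divide_simps)
    also have "\<dots> \<le> \<epsilon>"
      using \<open>0 < \<epsilon>\<close> K by (intro mult_left_le) auto
    finally show ?thesis .
  qed
  then show ?thesis
    by (metis dense_le_bounded measure_le_0_iff not_le)
qed

lemma stable_AE_nonzero:
  fixes \<alpha> :: real
  assumes "prob_space N" "0 < \<alpha>" and [measurable]: "Z \<in> borel_measurable N"
    and char_Z: "\<And>u. char (distr N borel Z) u = complex_of_real (exp (- (\<bar>u\<bar> powr \<alpha>)))"
  shows "AE \<omega> in N. Z \<omega> \<noteq> 0"
proof -
  interpret prob_space N by fact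
  have "measure (distr N borel Z) {0} = 0"
    using integrable_exp_neg_abs_powr[OF \<open>0 < \<alpha>\<close>]
    by (intro measure_singleton_eq_0_if_integrable_char) (auto simp: char_Z)
  then have "prob {\<omega> \<in> space N. Z \<omega> = 0} = 0"
    by (subst (asm) measure_distr) (auto simp: vimage_def Int_def conj_commute)
  then show ?thesis
    by (subst AE_iff_measurable[OF _ refl]) (auto simp: emeasure_eq_measure)
qed

lemma stable_distr_eq_scaled:
  fixes \<alpha> s :: real
  assumes "prob_space N" "Z \<in> borel_measurable N"
    and char_Z: "\<And>u. char (distr N borel Z) u = complex_of_real (exp (- (\<bar>u\<bar> powr \<alpha>)))"
    and "prob_space M" "W \<in> borel_measurable M"
    and char_W: "\<And>u. char (distr M borel W) u = complex_of_real (exp (- (\<bar>u\<bar> powr \<alpha>) * s))"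
    and "0 \<le> s" "0 < \<alpha>"
  shows "distr M borel W = distr N borel (\<lambda>\<omega>. s powr (1 / \<alpha>) * Z \<omega>)"
proof (rule Levy_uniqueness)
  interpret N: prob_space N by fact
  interpret M: prob_space M by fact
  show "real_distribution (distr M borel W)" "real_distribution (distr N borel (\<lambda>\<omega>. s powr (1 / \<alpha>) * Z \<omega>))"
    using assms by auto
  define c where "c = s powr (1 / \<alpha>)"
  have "distr N borel (\<lambda>\<omega>. c * Z \<omega>) = distr (distr N borel Z) borel (\<lambda>x. c * x)"
    using assms by (subst distr_distr) (auto simp: comp_def)
  then have "char (distr N borel (\<lambda>\<omega>. c * Z \<omega>)) u = char (distr N borel Z) (c * u)" for u
    using char_distr_mult assms by auto
  also have "\<dots> u = complex_of_real (exp (- (\<bar>u\<bar> powr \<alpha>) * s))" for u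
    using char_Z[of "c * u"] assms by (simp add: c_def abs_mult powr_mult powr_powr mult.commute)
  finally show "char (distr M borel W) = char (distr N borel (\<lambda>\<omega>. s powr (1 / \<alpha>) * Z \<omega>))"
    using char_W unfolding c_def by auto
qed

lemma stable_distr_uminus:
  fixes \<alpha> :: real
  assumes "prob_space N" "Z \<in> borel_measurable N"
    and char_Z: "\<And>u. char (distr N borel Z) u = complex_of_real (exp (- (\<bar>u\<bar> powr \<alpha>)))"
  shows "distr N borel (\<lambda>\<omega>. - Z \<omega>) = distr N borel Z"
proof (rule Levy_uniqueness)
  interpret prob_space N by fact
  show "real_distribution (distr N borel Z)" "real_distribution (distr N borel (\<lambda>\<omega>. - Z \<omega>))"
    using assms by auto
  have "char (distr N borel (\<lambda>\<omega>. - Z \<omega>)) u = char (distr N borel Z) (- u)" for u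
    unfolding char_def using assms by (simp add: integral_distr)
  then show "char (distr N borel (\<lambda>\<omega>. - Z \<omega>)) = char (distr N borel Z)"
    using char_Z by auto
qed

lemma (in prob_space) indep_var_commute:
  assumes "indep_var S X T Y"
  shows "indep_var T Y S X"
proof -
  let ?A = "sigma_sets (space M) {X -` A \<inter> space M |A. A \<in> sets S}"
  let ?B = "sigma_sets (space M) {Y -` B \<inter> space M |B. B \<in> sets T}"
  have "random_variable S X" "random_variable T Y" "?A \<subseteq> events" "?B \<subseteq> events"
    and indep: "\<forall>a\<in>?A. \<forall>b\<in>?B. prob (a \<inter> b) = prob a * prob b"
    using assms unfolding indep_var_eq indep_sets2_eq by blast+
  moreover have "\<forall>b\<in>?B. \<forall>a\<in>?A. prob (b \<inter> a) = prob b * prob a"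
  proof (intro ballI)
    fix b a
    assume "b \<in> ?B" "a \<in> ?A"
    then have "prob (a \<inter> b) = prob a * prob b"
      using indep by blast
    then show "prob (b \<inter> a) = prob b * prob a"
      by (simp add: Int_commute mult.commute)
  qed
  ultimately show ?thesis
    unfolding indep_var_eq indep_sets2_eq by blast
qed

lemma integral_indep_var_eq:
  fixes A B :: "'a \<Rightarrow> real" and A' B' :: "'b \<Rightarrow> real"
  assumes "prob_space M" "prob_space N"
    and "prob_space.indep_var M borel A borel B" "prob_space.indep_var N borel A' borel B'"
    and "distr M borel A = distr N borel A'" "distr M borel B = distr N borel B'"
    and g: "(g :: real \<times> real \<Rightarrow> real) \<in> borel_measurable (borel \<Otimes>\<^sub>M borel)"
  shows "(\<integral>x. g (A x, B x) \<partial>M) = (\<integral>x. g (A' x, B' x) \<partial>N)"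
proof -
  interpret M: prob_space M by fact
  interpret N: prob_space N by fact
  have M: "M.random_variable borel A" "M.random_variable borel B"
    "distr M borel A \<Otimes>\<^sub>M distr M borel B = distr M (borel \<Otimes>\<^sub>M borel) (\<lambda>x. (A x, B x))"
    using assms(3) M.indep_var_distribution_eq by blast+
  have M_pair: "(\<lambda>x. (A x, B x)) \<in> measurable M (borel \<Otimes>\<^sub>M borel)"
    using M(1,2) by (rule measurable_Pair)
  have N: "N.random_variable borel A'" "N.random_variable borel B'"
    "distr N borel A' \<Otimes>\<^sub>M distr N borel B' = distr N (borel \<Otimes>\<^sub>M borel) (\<lambda>x. (A' x, B' x))"
    using assms(4) N.indep_var_distribution_eq by blast+
  have N_pair: "(\<lambda>x. (A' x, B' x)) \<in> measurable N (borel \<Otimes>\<^sub>M borel)"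
    using N(1,2) by (rule measurable_Pair)
  have "(\<integral>x. g (A x, B x) \<partial>M) = integral\<^sup>L (distr M (borel \<Otimes>\<^sub>M borel) (\<lambda>x. (A x, B x))) g"
    by (rule integral_distr[OF M_pair g, symmetric])
  also have "\<dots> = integral\<^sup>L (distr N (borel \<Otimes>\<^sub>M borel) (\<lambda>x. (A' x, B' x))) g"
    using M(3) N(3) assms(5,6) by simp
  also have "\<dots> = (\<integral>x. g (A' x, B' x) \<partial>N)"
    by (rule integral_distr[OF N_pair g])
  finally show ?thesis .
qed

section \<open>The sign threshold and the window length\<close>

lemma powr_le_powr_iff:
  fixes x y a :: real
  assumes "0 < a" "0 \<le> x" "0 \<le> y"
  shows "x powr a \<le> y powr a \<longleftrightarrow> x \<le> y"
  using assms powr_mono2[of a x y] powr_less_mono2[of a y x] by (auto simp: not_le[symmetric])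

text \<open>
  If \<open>X\<^sub>u = u\<^bsup>1/\<alpha>\<^esup> x\<close> and \<open>X\<^sub>v - X\<^sub>u = (v - u)\<^bsup>1/\<alpha>\<^esup> y\<close>, then \<open>|X\<^sub>v - X\<^sub>u| \<le> |X\<^sub>u|\<close> iff
  \<open>sign_threshold \<alpha> x y \<le> u / v\<close>. The variable \<open>D\<close> of the theorem is \<open>1 - sign_threshold \<alpha> Z Zt\<close>.
\<close>
definition sign_threshold :: "real \<Rightarrow> real \<Rightarrow> real \<Rightarrow> real" where
  "sign_threshold \<alpha> x y = \<bar>y / x\<bar> powr \<alpha> / (1 + \<bar>y / x\<bar> powr \<alpha>)"

lemma sign_threshold_nonneg: "0 \<le> sign_threshold \<alpha> x y"
  by (simp add: sign_threshold_def)

lemma sign_threshold_less_1: "sign_threshold \<alpha> x y < 1"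
  by (simp add: sign_threshold_def add_pos_nonneg)

lemma sign_threshold_pos: "x \<noteq> 0 \<Longrightarrow> y \<noteq> 0 \<Longrightarrow> 0 < sign_threshold \<alpha> x y"
  by (simp add: sign_threshold_def add_pos_nonneg)

lemma one_minus_sign_threshold: "1 - sign_threshold \<alpha> x y = 1 / (1 + \<bar>y / x\<bar> powr \<alpha>)"
proof -
  have "0 < 1 + \<bar>y / x\<bar> powr \<alpha>"
    by (simp add: add_pos_nonneg)
  then show ?thesis
    unfolding sign_threshold_def by (simp add: field_simps)
qed

lemma sign_threshold_commute:
  assumes "x \<noteq> 0" "y \<noteq> 0"
  shows "sign_threshold \<alpha> y x = 1 - sign_threshold \<alpha> x y"
proof -
  define r where "r = \<bar>y / x\<bar> powr \<alpha>"
  have "0 < r"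
    unfolding r_def using assms by simp
  have "\<bar>x / y\<bar> powr \<alpha> * r = 1"
    unfolding r_def using assms by (simp flip: powr_mult)
  moreover have "0 < 1 + \<bar>x / y\<bar> powr \<alpha>"
    by (simp add: add_pos_nonneg)
  ultimately show ?thesis
    using \<open>0 < r\<close> unfolding one_minus_sign_threshold sign_threshold_def r_def[symmetric]
    by (simp add: field_simps)
qed

lemma sign_threshold_measurable [measurable (raw)]:
  assumes [measurable]: "f \<in> borel_measurable M" "g \<in> borel_measurable M"
  shows "(\<lambda>x. sign_threshold \<alpha> (f x) (g x)) \<in> borel_measurable M"
  unfolding sign_threshold_def by measurable

lemma scaled_abs_le_iff_sign_threshold:
  fixes \<alpha> u v x y :: real
  assumes "0 < \<alpha>" "0 < u" "u < v" "x \<noteq> 0"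
  shows "(v - u) powr (1 / \<alpha>) * \<bar>y\<bar> \<le> u powr (1 / \<alpha>) * \<bar>x\<bar> \<longleftrightarrow> sign_threshold \<alpha> x y \<le> u / v"
proof -
  define r where "r = \<bar>y / x\<bar> powr \<alpha>"
  have "0 \<le> r" "0 < \<bar>x\<bar> powr \<alpha>"
    unfolding r_def using assms by auto
  have "(v - u) powr (1 / \<alpha>) * \<bar>y\<bar> \<le> u powr (1 / \<alpha>) * \<bar>x\<bar> \<longleftrightarrow>
      ((v - u) powr (1 / \<alpha>) * \<bar>y\<bar>) powr \<alpha> \<le> (u powr (1 / \<alpha>) * \<bar>x\<bar>) powr \<alpha>"
    using assms by (simp add: powr_le_powr_iff)
  also have "\<dots> \<longleftrightarrow> (v - u) * \<bar>y\<bar> powr \<alpha> \<le> u * \<bar>x\<bar> powr \<alpha>"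
    using assms by (simp add: powr_mult powr_powr)
  also have "\<dots> \<longleftrightarrow> (v - u) * r \<le> u"
    using \<open>0 < \<bar>x\<bar> powr \<alpha>\<close> by (simp add: r_def abs_divide powr_divide pos_divide_le_eq field_simps)
  also have "\<dots> \<longleftrightarrow> r / (1 + r) \<le> u / v"
    using \<open>0 \<le> r\<close> assms by (simp add: divide_simps algebra_simps add_pos_nonneg)
  finally show ?thesis
    by (simp add: sign_threshold_def r_def)
qed

lemma indicator_sign_flips:
  fixes p q :: real
  assumes "p \<noteq> 0"
  shows "indicator {0..} p * indicator {0..} (p + q) + indicator {0..} (- p) * indicator {0..} (- p + q)
       + indicator {0..} p * indicator {0..} (p - q) + indicator {0..} (- p) * indicator {0..} (- p - q)
       = (1::real) + indicator {..\<bar>p\<bar>} \<bar>q\<bar>"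
  using assms by (cases "p > 0"; cases "q \<ge> 0") (auto simp: indicator_def)

text \<open>
  The Lebesgue measure of \<open>{t \<in> [0, T]. e \<le> min u t / max u t}\<close>; the case \<open>e = 0\<close> is separate
  because \<open>u / 0 = 0\<close>.
\<close>
definition window_length :: "real \<Rightarrow> real \<Rightarrow> real \<Rightarrow> real" where
  "window_length T u e = (if e = 0 then T else min T (u / e)) - u * e"

lemma window_length_measurable [measurable (raw)]:
  assumes [measurable]: "f \<in> borel_measurable M"
  shows "(\<lambda>x. window_length T u (f x)) \<in> borel_measurable M"
  unfolding window_length_def by measurable

lemma window_length_mult:
  assumes "0 < d"
  shows "window_length (d * T) (d * u) e = d * window_length T u e"
  using assms by (simp add: window_length_def min_mult_distrib_left algebra_simps)

lemma window_length_bounds: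
  assumes "0 \<le> u" "u \<le> T" "0 \<le> e" "e \<le> 1"
  shows "0 \<le> window_length T u e" "window_length T u e \<le> T"
proof -
  have "0 \<le> u * e" "u * e \<le> u"
    using assms by (auto simp: mult_left_le)
  moreover have "u \<le> u / e" if "e \<noteq> 0"
    using assms that by (simp add: le_divide_eq mult_left_le)
  ultimately have "u * e \<le> (if e = 0 then T else min T (u / e))" "(if e = 0 then T else min T (u / e)) \<le> T"
    using assms by auto
  then show "0 \<le> window_length T u e" "window_length T u e \<le> T"
    unfolding window_length_def using \<open>0 \<le> u * e\<close> by linarith+
qed

lemma integral_window_indicator:
  assumes "0 < u" "u \<le> T" "0 \<le> e" "e < 1"
  shows "(\<integral>t. indicator {0..T} t * indicator {..min u t / max u t} e \<partial>lborel) = window_length T u e"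
proof (cases "e = 0")
  case True
  then have "(\<lambda>t. indicator {0..T} t * indicator {..min u t / max u t} e) = (indicator {0..T} :: real \<Rightarrow> real)"
    using assms by (auto simp: indicator_def min_def max_def)
  then show ?thesis
    using True assms by (simp add: window_length_def)
next
  case False
  then have "0 < e"
    using assms by simp
  have "u * e \<le> u" "u \<le> u / e" "0 < u * e"
    using assms \<open>0 < e\<close> by (auto simp: mult_left_le le_divide_eq)
  have window: "(0 \<le> t \<and> t \<le> T \<and> e \<le> min u t / max u t) \<longleftrightarrow> (u * e \<le> t \<and> t \<le> T \<and> t \<le> u / e)" for t
  proof (cases "t \<le> u")
    case True
    then have "e \<le> min u t / max u t \<longleftrightarrow> u * e \<le> t"
      using assms by (simp add: le_divide_eq mult.commute)
    then show ?thesis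
      using True assms \<open>u \<le> u / e\<close> \<open>0 < u * e\<close> by auto
  next
    case False
    then have "e \<le> min u t / max u t \<longleftrightarrow> t \<le> u / e"
      using assms \<open>0 < e\<close> by (simp add: le_divide_eq divide_le_eq mult.commute)
    moreover have "u * e < t"
      using False \<open>u * e \<le> u\<close> by linarith
    ultimately show ?thesis
      using assms \<open>0 < u * e\<close> by auto
  qed
  have "indicator {0..T} t * indicator {..min u t / max u t} e = (indicator {u * e..min T (u / e)} t :: real)" for t
    unfolding indicator_def of_bool_conj[symmetric] using window[of t] by (intro arg_cong[where f=of_bool]) auto
  then have "(\<lambda>t. indicator {0..T} t * indicator {..min u t / max u t} e) = (indicator {u * e..min T (u / e)} :: real \<Rightarrow> real)"
    by auto
  moreover have "u * e \<le> T" "u * e \<le> u / e"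
    using assms \<open>u * e \<le> u\<close> \<open>u \<le> u / e\<close> by linarith+
  ultimately show ?thesis
    using False by (simp add: window_length_def)
qed

lemma integral_window_indicator_affine:
  assumes "0 < u" "u \<le> T" "0 \<le> e" "e < 1"
  shows "(\<integral>t. indicator {0..T} t * ((1 + indicator {..min u t / max u t} e) / 4) \<partial>lborel)
       = (T + window_length T u e) / 4"
proof -
  have int_T: "integrable lborel (indicator {0..T} :: real \<Rightarrow> real)"
    by (simp add: integrable_indicator_iff emeasure_lborel_Icc_eq)
  have int_W: "integrable lborel (\<lambda>t. indicator {0..T} t * indicator {..min u t / max u t} e :: real)"
  proof (rule Bochner_Integration.integrable_bound[OF int_T])
    show "(\<lambda>t. indicator {0..T} t * indicator {..min u t / max u t} e :: real) \<in> borel_measurable lborel"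
      unfolding indicator_def atMost_iff atLeastAtMost_iff by measurable
    show "AE t in lborel. norm (indicator {0..T} t * indicator {..min u t / max u t} e :: real)
        \<le> norm (indicator {0..T} t :: real)"
      by (rule AE_I2) (simp add: indicator_def)
  qed
  have "(\<integral>t. indicator {0..T} t * ((1 + indicator {..min u t / max u t} e) / (4::real)) \<partial>lborel)
      = (\<integral>t. indicator {0..T} t / 4 + indicator {0..T} t * indicator {..min u t / max u t} e / 4 \<partial>lborel)"
    by (simp add: ring_distribs add_divide_distrib)
  also have "\<dots> = (T + window_length T u e) / 4"
    using int_T int_W assms by (simp add: integral_window_indicator add_divide_distrib)
  finally show ?thesis .
qed

lemma psi_measurable [measurable]: "psi \<in> borel_measurable borel"
  unfolding psi_def[abs_def] frac_def by measurable

lemma psi_of_nat_minus: "psi (real n - x) = psi x"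
proof -
  have "frac (real n - x) = frac (- x)"
    using frac_add_of_int_left[of "int n" "- x"] by simp
  then show ?thesis
    unfolding psi_def by (auto simp: frac_neg power2_eq_square algebra_simps)
qed

lemma sum_min_divide:
  fixes e :: real
  assumes "0 < e" "e < 1"
  shows "(\<Sum>j=1..<n. min (real n) (real j / e)) = (real n)\<^sup>2 - n / 2 - (real n)\<^sup>2 * e / 2 - psi (n * e) / (2 * e)"
proof (cases "n = 0")
  case True
  then show ?thesis
    by (simp add: psi_def)
next
  case False
  define K where "K = nat \<lfloor>n * e\<rfloor>"
  have K: "real K = n * e - frac (n * e)"
    using assms by (simp add: K_def frac_def)
  have le_K: "real j / e \<le> n \<longleftrightarrow> j \<le> K" for j :: nat
    using assms by (simp add: K_def divide_le_eq le_nat_iff le_floor_iff mult.commute)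
  have "real K \<le> n * e" "n * e < n"
    using K assms False by auto
  then have "real K < n"
    by linarith
  then have parts: "{1..<n} = {1..K} \<union> {K<..<n}" "{1..K} \<inter> {K<..<n} = {}"
    by auto
  have min_eq: "min (real n) (real j / e) = (if j \<le> K then real j / e else real n)" for j
    using le_K[of j] by (cases "j \<le> K") (auto simp: min_def)
  have "(\<Sum>j=1..<n. min (real n) (real j / e))
      = (\<Sum>j=1..K. min (real n) (real j / e)) + (\<Sum>j\<in>{K<..<n}. min (real n) (real j / e))"
    unfolding parts by (rule sum.union_disjoint) (use parts in auto)
  also have "(\<Sum>j=1..K. min (real n) (real j / e)) = (\<Sum>j=1..K. real j / e)"
    by (rule sum.cong) (auto simp: min_eq)
  also have "(\<Sum>j\<in>{K<..<n}. min (real n) (real j / e)) = (\<Sum>j\<in>{K<..<n}. real n)"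
    by (rule sum.cong) (auto simp: min_eq)
  also have "(\<Sum>j=1..K. real j / e) = real K * (real K + 1) / (2 * e)"
    using assms by (induction K) (auto simp: field_simps)
  also have "(\<Sum>j\<in>{K<..<n}. real n) = real n * (real n - 1 - real K)"
    using \<open>real K < n\<close> by (simp add: of_nat_diff)
  finally show ?thesis
    unfolding K psi_def using assms by (simp add: field_simps) (simp add: algebra_simps power2_eq_square)
qed

lemma sum_window_length:
  fixes e :: real and n :: nat
  assumes "0 < e" "e < 1"
  shows "(\<Sum>j=1..<n. window_length n (real j) e) = ((real n)\<^sup>2 - n / 2) * (1 - e) - psi (n * e) / (2 * e)"
proof -
  have gauss: "(\<Sum>j=1..<n. real j) = real n * (real n - 1) / 2"
    by (induction n) (auto simp: field_simps)
  have "(\<Sum>j=1..<n. window_length n (real j) e)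
      = (\<Sum>j=1..<n. min (real n) (real j / e)) - e * (\<Sum>j=1..<n. real j)"
    using assms by (simp add: window_length_def sum_subtractf sum_distrib_left mult.commute)
  also have "\<dots> = ((real n)\<^sup>2 - n / 2) * (1 - e) - psi (n * e) / (2 * e)"
    unfolding gauss sum_min_divide[OF assms] using assms by (simp add: field_simps power2_eq_square)
  finally show ?thesis .
qed

lemma sum_window_length_reflect:
  fixes e :: real and n :: nat
  assumes "0 < e" "e < 1"
  shows "(\<Sum>j=1..<n. window_length n (real j) e) + (\<Sum>j=1..<n. window_length n (real j) (1 - e))
       = (real n)\<^sup>2 - n / 2 - psi (n * (1 - e)) / (2 * (1 - e) * e)"
proof -
  have "0 < 1 - e" "1 - e < 1"
    using assms by auto
  moreover have "psi (n * e) = psi (n * (1 - e))"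
    using psi_of_nat_minus[of n "n * e"] by (simp add: algebra_simps)
  ultimately show ?thesis
    using assms unfolding sum_window_length[OF assms] sum_window_length[OF \<open>0 < 1 - e\<close> \<open>1 - e < 1\<close>]
    by (simp add: field_simps)
qed

section \<open>Joint measurability and Fubini\<close>

lemma dyadic_approx_at_right:
  fixes t :: real
  shows "filterlim (\<lambda>n::nat. (real_of_int \<lfloor>t * 2 ^ n\<rfloor> + 1) / 2 ^ n) (at_right t) sequentially"
proof (rule tendsto_imp_filterlim_at_right)
  have lower: "t < (real_of_int \<lfloor>t * 2 ^ n\<rfloor> + 1) / 2 ^ n" for n :: nat
    by (simp add: pos_less_divide_eq)
  have upper: "(real_of_int \<lfloor>t * 2 ^ n\<rfloor> + 1) / 2 ^ n \<le> t + 1 / 2 ^ n" for n :: nat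
    by (simp add: divide_simps)
  have "(\<lambda>n::nat. t + 1 / 2 ^ n) \<longlonglongrightarrow> t + 0"
    by (intro tendsto_intros LIMSEQ_divide_realpow_zero) (simp_all add: LIMSEQ_inverse_realpow_zero)
  then have "(\<lambda>n::nat. t + 1 / 2 ^ n) \<longlonglongrightarrow> t"
    by simp
  then show "(\<lambda>n::nat. (real_of_int \<lfloor>t * 2 ^ n\<rfloor> + 1) / 2 ^ n) \<longlonglongrightarrow> t"
    by (rule tendsto_sandwich[of "\<lambda>n. t" _ _ "\<lambda>n. t + 1 / 2 ^ n", rotated 3])
      (use lower upper in \<open>auto intro!: always_eventually less_imp_le\<close>)
  show "\<forall>\<^sub>F n in sequentially. t < (real_of_int \<lfloor>t * 2 ^ n\<rfloor> + 1) / 2 ^ n"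
    using lower by (intro always_eventually) auto
qed

text \<open>
  The process is only assumed measurable at times \<open>t \<ge> 0\<close>, hence the clamping \<open>max t 0\<close>.
\<close>
lemma measurable_right_continuous_process:
  fixes X :: "real \<Rightarrow> 'a \<Rightarrow> real"
  assumes X_meas: "\<And>t. 0 \<le> t \<Longrightarrow> X t \<in> borel_measurable M"
    and X_cont: "\<And>\<omega> t. \<omega> \<in> space M \<Longrightarrow> 0 \<le> t \<Longrightarrow> ((\<lambda>s. X s \<omega>) \<longlongrightarrow> X t \<omega>) (at_right t)"
  shows "(\<lambda>p. X (max (fst p) 0) (snd p)) \<in> borel_measurable ((lborel :: real measure) \<Otimes>\<^sub>M M)"
proof (rule borel_measurable_LIMSEQ_real)
  define s where "s n i = (max (real_of_int i) 0 + 1) / 2 ^ n" for n :: nat and i :: int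
  define Y where "Y n p = X (s n \<lfloor>max (fst p) 0 * 2 ^ n\<rfloor>) (snd p)" for n and p :: "real \<times> 'a"
  show "Y n \<in> borel_measurable (lborel \<Otimes>\<^sub>M M)" for n
    unfolding Y_def
  proof (rule measurable_compose_countable[where f="\<lambda>i p. X (s n i) (snd p)"])
    fix i
    have "0 \<le> s n i"
      by (simp add: s_def)
    then show "(\<lambda>p. X (s n i) (snd p)) \<in> borel_measurable (lborel \<Otimes>\<^sub>M M)"
      using X_meas by measurable
  qed measurable
  fix p :: "real \<times> 'a"
  assume "p \<in> space (lborel \<Otimes>\<^sub>M M)"
  then have "snd p \<in> space M"
    by (auto simp: space_pair_measure)
  define t where "t = max (fst p) 0"
  have "Y n p = X ((real_of_int \<lfloor>t * 2 ^ n\<rfloor> + 1) / 2 ^ n) (snd p)" for n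
    unfolding Y_def s_def t_def by simp
  moreover have "(\<lambda>n. X ((real_of_int \<lfloor>t * 2 ^ n\<rfloor> + 1) / 2 ^ n) (snd p)) \<longlonglongrightarrow> X t (snd p)"
    using X_cont[OF \<open>snd p \<in> space M\<close>] dyadic_approx_at_right[of t]
    by (rule filterlim_compose) (simp add: t_def)
  ultimately show "(\<lambda>n. Y n p) \<longlonglongrightarrow> X (max (fst p) 0) (snd p)"
    by (simp add: t_def)
qed

lemma (in prob_space) Fubini_indicator_Icc:
  fixes h :: "real \<Rightarrow> 'a \<Rightarrow> real"
  assumes [measurable]: "(\<lambda>p. h (fst p) (snd p)) \<in> borel_measurable (lborel \<Otimes>\<^sub>M M)"
    and bound: "\<And>t \<omega>. \<bar>h t \<omega>\<bar> \<le> B"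
  shows "(\<integral>\<omega>. (\<integral>t. indicator {a..b} t * h t \<omega> \<partial>lborel) \<partial>M)
       = (\<integral>t. indicator {a..b} t * (\<integral>\<omega>. h t \<omega> \<partial>M) \<partial>lborel)"
proof -
  have "emeasure (lborel \<Otimes>\<^sub>M M) ({a..b} \<times> space M) < \<infinity>"
    by (subst emeasure_pair_measure_Times) (auto simp: emeasure_space_1 emeasure_lborel_Icc_eq)
  interpret pair_sigma_finite lborel M ..
  have "integrable (lborel \<Otimes>\<^sub>M M) (\<lambda>p. indicator {a..b} (fst p) * h (fst p) (snd p))"
  proof (rule integrableI_bounded_set[where A="{a..b} \<times> space M" and B=B])
    show "{a..b} \<times> space M \<in> sets (lborel \<Otimes>\<^sub>M M)"
      by (intro pair_measureI) auto
    show "(\<lambda>p. indicator {a..b} (fst p) * h (fst p) (snd p)) \<in> borel_measurable (lborel \<Otimes>\<^sub>M M)"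
      by measurable
    show "AE p in lborel \<Otimes>\<^sub>M M. p \<in> {a..b} \<times> space M \<longrightarrow> norm (indicator {a..b} (fst p) * h (fst p) (snd p)) \<le> B"
      using bound by (intro AE_I2) (auto simp: abs_mult indicator_def)
    show "AE p in lborel \<Otimes>\<^sub>M M. p \<notin> {a..b} \<times> space M \<longrightarrow> indicator {a..b} (fst p) * h (fst p) (snd p) = 0"
      by (rule AE_I2) (auto simp: space_pair_measure indicator_def)
  qed fact
  then show ?thesis
    using Fubini_integral[of "\<lambda>t \<omega>. indicator {a..b} t * h t \<omega>"] by (simp add: case_prod_beta')
qed

lemma (in prob_space) integrable_window_length:
  assumes [measurable]: "f \<in> borel_measurable M"
    and "\<And>\<omega>. 0 \<le> f \<omega> \<and> f \<omega> \<le> 1" "0 \<le> u" "u \<le> T"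
  shows "integrable M (\<lambda>\<omega>. window_length T u (f \<omega>))"
proof (rule integrable_const_bound[where B=T])
  show "AE \<omega> in M. norm (window_length T u (f \<omega>)) \<le> T"
    using assms window_length_bounds[of u T] by (intro AE_I2) (simp add: abs_le_iff)
qed measurable

section \<open>The symmetric stable Levy process\<close>

abbreviation nonneg_ind :: "real \<Rightarrow> real" where
  "nonneg_ind \<equiv> indicator {0..}"

locale sym_stable_levy_process =
  fixes M :: "'a measure" and \<alpha> :: real and X :: "real \<Rightarrow> 'a \<Rightarrow> real"
  assumes sym_stable_levy: "sym_stable_levy M \<alpha> X"
begin

sublocale M: prob_space M
  using sym_stable_levy by (simp add: sym_stable_levy_def)

lemma X_0: "\<omega> \<in> space M \<Longrightarrow> X 0 \<omega> = 0"
  using sym_stable_levy by (simp add: sym_stable_levy_def)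

lemma X_measurable: "0 \<le> t \<Longrightarrow> X t \<in> borel_measurable M"
  using sym_stable_levy by (simp add: sym_stable_levy_def)

lemma char_increment:
  "0 \<le> s \<Longrightarrow> s \<le> t \<Longrightarrow>
    char (distr M borel (\<lambda>\<omega>. X t \<omega> - X s \<omega>)) u = complex_of_real (exp (- (\<bar>u\<bar> powr \<alpha>) * (t - s)))"
  using sym_stable_levy by (simp add: sym_stable_levy_def)

lemma X_tendsto_at_right: "\<omega> \<in> space M \<Longrightarrow> 0 \<le> t \<Longrightarrow> ((\<lambda>s. X s \<omega>) \<longlongrightarrow> X t \<omega>) (at_right t)"
  using sym_stable_levy by (simp add: sym_stable_levy_def continuous_within)

lemma indep_vars_increments:
  "0 \<le> ts 0 \<Longrightarrow> (\<forall>i<k. ts i < ts (Suc i)) \<Longrightarrow>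
    M.indep_vars (\<lambda>_. borel) (\<lambda>i \<omega>. X (ts (Suc i)) \<omega> - X (ts i) \<omega>) {..<k}"
  using sym_stable_levy by (simp add: sym_stable_levy_def)

lemma indep_var_increments:
  assumes "0 < u" "u < v"
  shows "M.indep_var borel (\<lambda>\<omega>. X u \<omega> - X 0 \<omega>) borel (\<lambda>\<omega>. X v \<omega> - X u \<omega>)"
proof -
  define ts :: "nat \<Rightarrow> real" where "ts i = (if i = 0 then 0 else if i = 1 then u else v)" for i
  define Y where "Y i \<omega> = X (ts (Suc i)) \<omega> - X (ts i) \<omega>" for i \<omega>
  have "M.indep_vars (\<lambda>_. borel) Y {..<2}"
    unfolding Y_def using assms by (intro indep_vars_increments) (auto simp: ts_def less_2_cases_iff)
  then have "M.indep_var (Pi\<^sub>M {0} (\<lambda>_. borel)) (\<lambda>\<omega>. restrict (\<lambda>i. Y i \<omega>) {0})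
      (Pi\<^sub>M {1} (\<lambda>_. borel)) (\<lambda>\<omega>. restrict (\<lambda>i. Y i \<omega>) {1})"
    by (rule M.indep_var_restrict) auto
  then have "M.indep_var borel ((\<lambda>f. f 0) \<circ> (\<lambda>\<omega>. restrict (\<lambda>i. Y i \<omega>) {0}))
      borel ((\<lambda>f. f 1) \<circ> (\<lambda>\<omega>. restrict (\<lambda>i. Y i \<omega>) {1}))"
    by (rule M.indep_var_compose) (auto intro: measurable_component_singleton)
  then show ?thesis
    by (simp add: comp_def Y_def ts_def)
qed

lemma X_measurable_pair: "(\<lambda>p. X (max (fst p) 0) (snd p)) \<in> borel_measurable (lborel \<Otimes>\<^sub>M M)"
  using X_measurable X_tendsto_at_right by (rule measurable_right_continuous_process)

lemma occ_time_eq: "occ_time X T \<omega> = (\<integral>t. indicator {0..T} t * nonneg_ind (X (max t 0) \<omega>) \<partial>lborel)"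
  unfolding occ_time_def set_lebesgue_integral_def
  by (intro Bochner_Integration.integral_cong) (auto simp: indicator_def max_def)

lemma occ_time_measurable: "occ_time X T \<in> borel_measurable M"
proof -
  have "(\<lambda>p. X (max (snd p) 0) (fst p)) \<in> borel_measurable (M \<Otimes>\<^sub>M lborel)"
    using measurable_compose[OF measurable_pair_swap' X_measurable_pair] by (simp add: case_prod_beta')
  then have "(\<lambda>\<omega>. \<integral>t. indicator {0..T} t * nonneg_ind (X (max t 0) \<omega>) \<partial>lborel) \<in> borel_measurable M"
    by (intro lborel.borel_measurable_lebesgue_integral) (simp add: case_prod_beta')
  then show ?thesis
    by (simp add: occ_time_eq[abs_def])
qed

lemma occ_time_bounds:
  assumes "0 \<le> T"
  shows "0 \<le> occ_time X T \<omega>" "occ_time X T \<omega> \<le> T"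
proof -
  have "integrable lborel (indicator {0..T} :: real \<Rightarrow> real)"
    by (simp add: integrable_indicator_iff emeasure_lborel_Icc_eq)
  then have "occ_time X T \<omega> \<le> (\<integral>t. indicator {0..T} t \<partial>lborel)"
    unfolding occ_time_eq by (rule integral_mono') (auto simp: indicator_def)
  then show "occ_time X T \<omega> \<le> T"
    using assms by simp
  show "0 \<le> occ_time X T \<omega>"
    unfolding occ_time_eq by (intro integral_nonneg_AE) (auto simp: indicator_def)
qed

lemma integral_occ_time_mult:
  assumes "0 \<le> s"
  shows "(\<integral>\<omega>. occ_time X T \<omega> * nonneg_ind (X s \<omega>) \<partial>M)
       = (\<integral>t. indicator {0..T} t * (\<integral>\<omega>. nonneg_ind (X t \<omega>) * nonneg_ind (X s \<omega>) \<partial>M) \<partial>lborel)"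
proof -
  have [measurable]: "X s \<in> borel_measurable M" "(\<lambda>p. X (max (fst p) 0) (snd p)) \<in> borel_measurable (lborel \<Otimes>\<^sub>M M)"
    using X_measurable[OF assms] X_measurable_pair .
  have "(\<integral>\<omega>. occ_time X T \<omega> * nonneg_ind (X s \<omega>) \<partial>M)
      = (\<integral>\<omega>. (\<integral>t. indicator {0..T} t * (nonneg_ind (X (max t 0) \<omega>) * nonneg_ind (X s \<omega>)) \<partial>lborel) \<partial>M)"
    unfolding occ_time_eq by (simp flip: mult.assoc)
  also have "\<dots> = (\<integral>t. indicator {0..T} t * (\<integral>\<omega>. nonneg_ind (X (max t 0) \<omega>) * nonneg_ind (X s \<omega>) \<partial>M) \<partial>lborel)"
    by (rule M.Fubini_indicator_Icc[where B=1]) (measurable, simp add: indicator_def)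
  also have "\<dots> = (\<integral>t. indicator {0..T} t * (\<integral>\<omega>. nonneg_ind (X t \<omega>) * nonneg_ind (X s \<omega>) \<partial>M) \<partial>lborel)"
    by (rule Bochner_Integration.integral_cong) (simp_all add: indicator_def)
  finally show ?thesis .
qed

end

section \<open>Two independent standard symmetric stable variables\<close>

locale iid_sym_stable =
  fixes N :: "'b measure" and \<alpha> :: real and Z Zt :: "'b \<Rightarrow> real"
  assumes prob_space_N: "prob_space N" and \<alpha>_pos: "0 < \<alpha>"
    and Z_measurable [measurable]: "Z \<in> borel_measurable N"
    and Zt_measurable [measurable]: "Zt \<in> borel_measurable N"
    and indep_Z_Zt: "prob_space.indep_var N borel Z borel Zt"
    and char_Z: "\<And>u. char (distr N borel Z) u = complex_of_real (exp (- (\<bar>u\<bar> powr \<alpha>)))"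
    and char_Zt: "\<And>u. char (distr N borel Zt) u = complex_of_real (exp (- (\<bar>u\<bar> powr \<alpha>)))"
begin

sublocale N: prob_space N
  by (rule prob_space_N)

abbreviation \<Theta> :: "'b \<Rightarrow> real" where
  "\<Theta> \<omega> \<equiv> sign_threshold \<alpha> (Z \<omega>) (Zt \<omega>)"

lemma AE_Z_Zt_nonzero: "AE \<omega> in N. Z \<omega> \<noteq> 0 \<and> Zt \<omega> \<noteq> 0"
  using stable_AE_nonzero[OF prob_space_N \<alpha>_pos Z_measurable char_Z]
    stable_AE_nonzero[OF prob_space_N \<alpha>_pos Zt_measurable char_Zt]
  by eventually_elim auto

lemma indep_var_mult: "N.indep_var borel (\<lambda>\<omega>. a * Z \<omega>) borel (\<lambda>\<omega>. b * Zt \<omega>)"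
  using N.indep_var_compose[OF indep_Z_Zt, of "\<lambda>x. a * x" borel "\<lambda>x. b * x" borel]
  by (simp add: comp_def)

lemma integral_sign_changes:
  assumes g: "(g :: real \<times> real \<Rightarrow> real) \<in> borel_measurable (borel \<Otimes>\<^sub>M borel)"
    and "a \<in> {-1, 1}" "b \<in> {-1, 1}"
  shows "(\<integral>\<omega>. g (a * Z \<omega>, b * Zt \<omega>) \<partial>N) = (\<integral>\<omega>. g (Z \<omega>, Zt \<omega>) \<partial>N)"
proof (rule integral_indep_var_eq[OF prob_space_N prob_space_N indep_var_mult indep_Z_Zt _ _ g])
  show "distr N borel (\<lambda>\<omega>. a * Z \<omega>) = distr N borel Z"
    using assms(2) stable_distr_uminus[OF prob_space_N Z_measurable char_Z] by auto
  show "distr N borel (\<lambda>\<omega>. b * Zt \<omega>) = distr N borel Zt"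
    using assms(3) stable_distr_uminus[OF prob_space_N Zt_measurable char_Zt] by auto
qed

lemma integral_sign_patterns:
  fixes G :: "real \<times> real \<Rightarrow> real"
  assumes G: "G \<in> borel_measurable (borel \<Otimes>\<^sub>M borel)" and bound: "\<And>p. \<bar>G p\<bar> \<le> B"
  shows "4 * (\<integral>\<omega>. G (Z \<omega>, Zt \<omega>) \<partial>N)
       = (\<integral>\<omega>. G (Z \<omega>, Zt \<omega>) + G (- Z \<omega>, Zt \<omega>) + G (Z \<omega>, - Zt \<omega>) + G (- Z \<omega>, - Zt \<omega>) \<partial>N)"
proof -
  have "integrable N (\<lambda>\<omega>. G (s * Z \<omega>, r * Zt \<omega>))" for s r
  proof (rule N.integrable_const_bound[where B=B])
    show "AE \<omega> in N. norm (G (s * Z \<omega>, r * Zt \<omega>)) \<le> B"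
      by (simp add: bound)
    show "(\<lambda>\<omega>. G (s * Z \<omega>, r * Zt \<omega>)) \<in> borel_measurable N"
      by (rule measurable_compose[OF _ G]) measurable
  qed
  from this[of 1 1] this[of "-1" 1] this[of 1 "-1"] this[of "-1" "-1"]
    integral_sign_changes[OF G, of "-1" 1] integral_sign_changes[OF G, of 1 "-1"]
    integral_sign_changes[OF G, of "-1" "-1"]
  show ?thesis
    by (simp add: Bochner_Integration.integral_add)
qed

lemma integral_swap:
  assumes g: "(g :: real \<times> real \<Rightarrow> real) \<in> borel_measurable (borel \<Otimes>\<^sub>M borel)"
  shows "(\<integral>\<omega>. g (Zt \<omega>, Z \<omega>) \<partial>N) = (\<integral>\<omega>. g (Z \<omega>, Zt \<omega>) \<partial>N)"
proof (rule integral_indep_var_eq[OF prob_space_N prob_space_N N.indep_var_commute[OF indep_Z_Zt] indep_Z_Zt _ _ g])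
  have "distr N borel Zt = distr N borel Z"
    using char_Z char_Zt by (intro Levy_uniqueness) (auto simp: fun_eq_iff)
  then show "distr N borel Zt = distr N borel Z" "distr N borel Z = distr N borel Zt"
    by auto
qed

lemma integral_reflect_threshold:
  fixes f :: "real \<Rightarrow> real"
  assumes f: "f \<in> borel_measurable borel"
  shows "(\<integral>\<omega>. f (1 - \<Theta> \<omega>) \<partial>N) = (\<integral>\<omega>. f (\<Theta> \<omega>) \<partial>N)"
proof -
  have "(\<integral>\<omega>. f (1 - \<Theta> \<omega>) \<partial>N) = (\<integral>\<omega>. f (sign_threshold \<alpha> (Zt \<omega>) (Z \<omega>)) \<partial>N)"
  proof (rule integral_cong_AE)
    show "AE \<omega> in N. f (1 - \<Theta> \<omega>) = f (sign_threshold \<alpha> (Zt \<omega>) (Z \<omega>))"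
      using AE_Z_Zt_nonzero
    proof eventually_elim
      case (elim \<omega>)
      then show ?case
        using sign_threshold_commute[of "Z \<omega>" "Zt \<omega>" \<alpha>] by simp
    qed
  qed (rule measurable_compose[OF _ f], measurable)+
  also have "\<dots> = (\<integral>\<omega>. f (\<Theta> \<omega>) \<partial>N)"
  proof -
    have "(\<lambda>p. f (sign_threshold \<alpha> (fst p) (snd p))) \<in> borel_measurable (borel \<Otimes>\<^sub>M borel)"
      by (rule measurable_compose[OF _ f]) measurable
    from integral_swap[OF this] show ?thesis
      by simp
  qed
  finally show ?thesis .
qed

lemma integral_window_Fubini:
  assumes "0 < u" "u \<le> T"
  shows "(\<integral>t. indicator {0..T} t * (\<integral>\<omega>. (1 + indicator {..min u t / max u t} (\<Theta> \<omega>)) / 4 \<partial>N) \<partial>lborel)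
       = T / 4 + (\<integral>\<omega>. window_length T u (\<Theta> \<omega>) \<partial>N) / 4"
proof -
  have meas: "(\<lambda>p. (1 + indicator {..min u (fst p) / max u (fst p)} (\<Theta> (snd p))) / 4 :: real)
      \<in> borel_measurable (lborel \<Otimes>\<^sub>M N)"
    unfolding indicator_def atMost_iff by measurable
  have "(\<integral>t. indicator {0..T} t * (\<integral>\<omega>. (1 + indicator {..min u t / max u t} (\<Theta> \<omega>)) / (4::real) \<partial>N) \<partial>lborel)
      = (\<integral>\<omega>. (\<integral>t. indicator {0..T} t * ((1 + indicator {..min u t / max u t} (\<Theta> \<omega>)) / 4) \<partial>lborel) \<partial>N)"
    by (rule N.Fubini_indicator_Icc[where B=1, symmetric]) (fact meas, simp add: indicator_def)
  also have "\<dots> = (\<integral>\<omega>. (T + window_length T u (\<Theta> \<omega>)) / 4 \<partial>N)"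
    using assms by (intro Bochner_Integration.integral_cong refl integral_window_indicator_affine)
      (auto simp: sign_threshold_nonneg sign_threshold_less_1)
  also have "\<dots> = T / 4 + (\<integral>\<omega>. window_length T u (\<Theta> \<omega>) \<partial>N) / 4"
  proof -
    have "integrable N (\<lambda>\<omega>. window_length T u (\<Theta> \<omega>))"
      by (rule N.integrable_window_length)
        (measurable, use assms sign_threshold_nonneg sign_threshold_less_1 in \<open>auto intro: less_imp_le\<close>)
    then show ?thesis
      by (simp add: add_divide_distrib N.prob_space)
  qed
  finally show ?thesis .
qed

lemma integral_window_sum:
  fixes n :: nat
  shows "4 * (\<integral>\<omega>. (\<Sum>j=1..<n. window_length n (real j) (\<Theta> \<omega>)) \<partial>N)
    = 2 * (real n)\<^sup>2 - n - (\<integral>\<omega>. (let D = 1 / (1 + \<bar>Zt \<omega> / Z \<omega>\<bar> powr \<alpha>)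
               in psi (real n * D) / (D * (1 - D))) \<partial>N)"
proof -
  define W where "W e = (\<Sum>j=1..<n. window_length n (real j) e)" for e
  have W_borel: "W \<in> borel_measurable borel"
    unfolding W_def[abs_def] by measurable
  have [measurable]: "(\<lambda>x. W (f x)) \<in> borel_measurable N" if [measurable]: "f \<in> borel_measurable N" for f
    unfolding W_def by measurable
  have int: "integrable N (\<lambda>\<omega>. W (f \<omega>))"
    if "f \<in> borel_measurable N" "\<And>\<omega>. 0 \<le> f \<omega> \<and> f \<omega> \<le> 1" for f
    unfolding W_def using that by (intro Bochner_Integration.integrable_sum N.integrable_window_length) auto
  have "(\<integral>\<omega>. (let D = 1 / (1 + \<bar>Zt \<omega> / Z \<omega>\<bar> powr \<alpha>) in psi (real n * D) / (D * (1 - D))) \<partial>N)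
      = (\<integral>\<omega>. 2 * (real n)\<^sup>2 - n - 2 * (W (\<Theta> \<omega>) + W (1 - \<Theta> \<omega>)) \<partial>N)"
  proof (rule integral_cong_AE)
    show "AE \<omega> in N. (let D = 1 / (1 + \<bar>Zt \<omega> / Z \<omega>\<bar> powr \<alpha>) in psi (real n * D) / (D * (1 - D)))
        = 2 * (real n)\<^sup>2 - n - 2 * (W (\<Theta> \<omega>) + W (1 - \<Theta> \<omega>))"
      using AE_Z_Zt_nonzero
    proof eventually_elim
      case (elim \<omega>)
      then have "0 < \<Theta> \<omega>" "\<Theta> \<omega> < 1"
        by (auto simp: sign_threshold_pos sign_threshold_less_1)
      then show ?case
        unfolding Let_def one_minus_sign_threshold[symmetric] W_def sum_window_length_reflect[OF \<open>0 < \<Theta> \<omega>\<close> \<open>\<Theta> \<omega> < 1\<close>]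
        by (simp add: field_simps)
    qed
  qed (unfold Let_def, measurable, measurable)
  also have "\<dots> = 2 * (real n)\<^sup>2 - n - 2 * ((\<integral>\<omega>. W (\<Theta> \<omega>) \<partial>N) + (\<integral>\<omega>. W (1 - \<Theta> \<omega>) \<partial>N))"
  proof -
    have "integrable N (\<lambda>\<omega>. W (\<Theta> \<omega>))"
      by (rule int) (measurable, use sign_threshold_nonneg sign_threshold_less_1 in \<open>auto intro: less_imp_le\<close>)
    moreover have "integrable N (\<lambda>\<omega>. W (1 - \<Theta> \<omega>))"
      by (rule int) (measurable, use sign_threshold_nonneg sign_threshold_less_1 in \<open>auto intro: less_imp_le\<close>)
    ultimately show ?thesis
      by (simp add: N.prob_space)
  qed
  also have "(\<integral>\<omega>. W (1 - \<Theta> \<omega>) \<partial>N) = (\<integral>\<omega>. W (\<Theta> \<omega>) \<partial>N)"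
    by (rule integral_reflect_threshold[OF W_borel])
  finally show ?thesis
    unfolding W_def by simp
qed

end

section \<open>The occupation time and its Riemann sum\<close>

locale stable_occupation = sym_stable_levy_process M \<alpha> X + iid_sym_stable N \<alpha> Z Zt
  for M :: "'a measure" and \<alpha> :: real and X :: "real \<Rightarrow> 'a \<Rightarrow> real"
    and N :: "'b measure" and Z Zt :: "'b \<Rightarrow> real"
begin

lemma distr_increment:
  assumes "0 \<le> s" "s \<le> t" "W = Z \<or> W = Zt"
  shows "distr M borel (\<lambda>\<omega>. X t \<omega> - X s \<omega>) = distr N borel (\<lambda>\<omega>. (t - s) powr (1 / \<alpha>) * W \<omega>)"
proof (rule stable_distr_eq_scaled[OF prob_space_N _ _ M.prob_space_axioms])
  show "W \<in> borel_measurable N"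
    using assms(3) by auto
  show "char (distr N borel W) u = complex_of_real (exp (- (\<bar>u\<bar> powr \<alpha>)))" for u
    using assms(3) char_Z char_Zt by auto
  show "(\<lambda>\<omega>. X t \<omega> - X s \<omega>) \<in> borel_measurable M"
    using X_measurable assms by (intro borel_measurable_diff) auto
qed (use assms char_increment \<alpha>_pos in auto)

lemma integral_X_nonneg:
  assumes "0 < t"
  shows "(\<integral>\<omega>. nonneg_ind (X t \<omega>) \<partial>M) = 1 / 2"
proof -
  define c where "c = t powr (1 / \<alpha>)"
  have "0 < c"
    using assms by (simp add: c_def)
  have [measurable]: "X t \<in> borel_measurable M" "X 0 \<in> borel_measurable M"
    using X_measurable assms by auto
  have "(\<integral>\<omega>. nonneg_ind (X t \<omega>) \<partial>M) = (\<integral>\<omega>. nonneg_ind (X t \<omega> - X 0 \<omega>) \<partial>M)"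
    by (intro Bochner_Integration.integral_cong) (auto simp: X_0)
  also have "\<dots> = integral\<^sup>L (distr M borel (\<lambda>\<omega>. X t \<omega> - X 0 \<omega>)) nonneg_ind"
    by (rule integral_distr[symmetric]) auto
  also have "\<dots> = integral\<^sup>L (distr N borel (\<lambda>\<omega>. c * Z \<omega>)) nonneg_ind"
    using distr_increment[of 0 t Z] assms by (simp add: c_def)
  also have "\<dots> = (\<integral>\<omega>. nonneg_ind (c * Z \<omega>) \<partial>N)"
    by (rule integral_distr) auto
  finally have X_Z: "(\<integral>\<omega>. nonneg_ind (X t \<omega>) \<partial>M) = (\<integral>\<omega>. nonneg_ind (c * Z \<omega>) \<partial>N)" .
  have "(\<lambda>p. nonneg_ind (c * fst p)) \<in> borel_measurable (borel \<Otimes>\<^sub>M borel)"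
    by measurable
  then have "(\<integral>\<omega>. nonneg_ind (- (c * Z \<omega>)) \<partial>N) = (\<integral>\<omega>. nonneg_ind (c * Z \<omega>) \<partial>N)"
    using integral_sign_changes[of "\<lambda>p. nonneg_ind (c * fst p)" "-1" 1] by simp
  then have "2 * (\<integral>\<omega>. nonneg_ind (c * Z \<omega>) \<partial>N)
      = (\<integral>\<omega>. nonneg_ind (c * Z \<omega>) \<partial>N) + (\<integral>\<omega>. nonneg_ind (- (c * Z \<omega>)) \<partial>N)"
    by simp
  also have "\<dots> = (\<integral>\<omega>. nonneg_ind (c * Z \<omega>) + nonneg_ind (- (c * Z \<omega>)) \<partial>N)"
    by (rule Bochner_Integration.integral_add[symmetric])
      (auto intro!: N.integrable_const_bound[where B=1] simp: indicator_def)
  also have "\<dots> = (\<integral>\<omega>. 1 \<partial>N)"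
  proof (rule integral_cong_AE)
    show "AE \<omega> in N. nonneg_ind (c * Z \<omega>) + nonneg_ind (- (c * Z \<omega>)) = 1"
      using AE_Z_Zt_nonzero by eventually_elim (use \<open>0 < c\<close> in \<open>auto simp: indicator_def\<close>)
  qed measurable
  finally show ?thesis
    using X_Z by (simp add: N.prob_space)
qed

lemma integral_increments_pair:
  fixes g :: "real \<times> real \<Rightarrow> real"
  assumes "0 < u" "u < v" and g: "g \<in> borel_measurable (borel \<Otimes>\<^sub>M borel)"
  shows "(\<integral>\<omega>. g (X u \<omega>, X v \<omega> - X u \<omega>) \<partial>M)
       = (\<integral>\<omega>. g (u powr (1 / \<alpha>) * Z \<omega>, (v - u) powr (1 / \<alpha>) * Zt \<omega>) \<partial>N)"
proof -
  have "(\<integral>\<omega>. g (X u \<omega>, X v \<omega> - X u \<omega>) \<partial>M) = (\<integral>\<omega>. g (X u \<omega> - X 0 \<omega>, X v \<omega> - X u \<omega>) \<partial>M)"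
    by (intro Bochner_Integration.integral_cong) (auto simp: X_0)
  also have "\<dots> = (\<integral>\<omega>. g (u powr (1 / \<alpha>) * Z \<omega>, (v - u) powr (1 / \<alpha>) * Zt \<omega>) \<partial>N)"
  proof (rule integral_indep_var_eq[OF M.prob_space_axioms prob_space_N indep_var_increments[OF assms(1,2)] indep_var_mult _ _ g])
    show "distr M borel (\<lambda>\<omega>. X u \<omega> - X 0 \<omega>) = distr N borel (\<lambda>\<omega>. u powr (1 / \<alpha>) * Z \<omega>)"
      using distr_increment[of 0 u Z] assms by simp
    show "distr M borel (\<lambda>\<omega>. X v \<omega> - X u \<omega>) = distr N borel (\<lambda>\<omega>. (v - u) powr (1 / \<alpha>) * Zt \<omega>)"
      using distr_increment[of u v Zt] assms by simp
  qed
  finally show ?thesis .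
qed

lemma integral_X_nonneg_X_nonneg_less:
  assumes "0 < u" "u < v"
  shows "(\<integral>\<omega>. nonneg_ind (X u \<omega>) * nonneg_ind (X v \<omega>) \<partial>M) = (\<integral>\<omega>. (1 + indicator {..u / v} (\<Theta> \<omega>)) / 4 \<partial>N)"
proof -
  define a where "a = u powr (1 / \<alpha>)"
  define b where "b = (v - u) powr (1 / \<alpha>)"
  have "0 < a" "0 < b"
    using assms by (auto simp: a_def b_def)
  define G where "G p = nonneg_ind (a * fst p) * nonneg_ind (a * fst p + b * snd p)" for p :: "real \<times> real"
  have G_meas [measurable]: "G \<in> borel_measurable (borel \<Otimes>\<^sub>M borel)"
    unfolding G_def by measurable
  have "(\<lambda>p. nonneg_ind (fst p) * nonneg_ind (fst p + snd p)) \<in> borel_measurable (borel \<Otimes>\<^sub>M borel)"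
    by measurable
  from integral_increments_pair[OF assms this]
  have "(\<integral>\<omega>. nonneg_ind (X u \<omega>) * nonneg_ind (X v \<omega>) \<partial>M) = (\<integral>\<omega>. G (Z \<omega>, Zt \<omega>) \<partial>N)"
    by (simp add: G_def a_def b_def)
  also have "\<dots> = (\<integral>\<omega>. G (Z \<omega>, Zt \<omega>) + G (- Z \<omega>, Zt \<omega>) + G (Z \<omega>, - Zt \<omega>) + G (- Z \<omega>, - Zt \<omega>) \<partial>N) / 4"
  proof -
    have "\<bar>G p\<bar> \<le> 1" for p
      by (auto simp: G_def indicator_def)
    from integral_sign_patterns[OF G_meas this] show ?thesis
      by simp
  qed
  also have "\<dots> = (\<integral>\<omega>. 1 + indicator {..u / v} (\<Theta> \<omega>) \<partial>N) / 4"
  proof -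
    have "AE \<omega> in N. G (Z \<omega>, Zt \<omega>) + G (- Z \<omega>, Zt \<omega>) + G (Z \<omega>, - Zt \<omega>) + G (- Z \<omega>, - Zt \<omega>)
        = 1 + indicator {..u / v} (\<Theta> \<omega>)"
      using AE_Z_Zt_nonzero
    proof eventually_elim
      case (elim \<omega>)
      then have "a * Z \<omega> \<noteq> 0"
        using \<open>0 < a\<close> by simp
      moreover have "b * \<bar>Zt \<omega>\<bar> \<le> a * \<bar>Z \<omega>\<bar> \<longleftrightarrow> \<Theta> \<omega> \<le> u / v"
        using scaled_abs_le_iff_sign_threshold[OF \<alpha>_pos assms] elim by (simp add: a_def b_def)
      ultimately show ?case
        using indicator_sign_flips[of "a * Z \<omega>" "b * Zt \<omega>"] \<open>0 < a\<close> \<open>0 < b\<close>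
        by (simp add: G_def abs_mult indicator_def)
    qed
    then show ?thesis
      by (intro arg_cong[where f="\<lambda>x. x / 4"] integral_cong_AE) measurable
  qed
  finally show ?thesis
    by simp
qed

lemma integral_X_nonneg_X_nonneg:
  assumes "0 < u" "0 < t"
  shows "(\<integral>\<omega>. nonneg_ind (X t \<omega>) * nonneg_ind (X u \<omega>) \<partial>M)
       = (\<integral>\<omega>. (1 + indicator {..min u t / max u t} (\<Theta> \<omega>)) / 4 \<partial>N)"
proof (cases u t rule: linorder_cases)
  case less
  then show ?thesis
    using integral_X_nonneg_X_nonneg_less[OF assms(1) less] by (simp add: mult.commute)
next
  case equal
  then have "(\<integral>\<omega>. nonneg_ind (X t \<omega>) * nonneg_ind (X u \<omega>) \<partial>M) = (\<integral>\<omega>. nonneg_ind (X t \<omega>) \<partial>M)"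
    by (intro Bochner_Integration.integral_cong) (auto simp: indicator_def)
  then show ?thesis
    using equal assms integral_X_nonneg[OF assms(2)] sign_threshold_less_1
    by (simp add: indicator_def less_imp_le N.prob_space)
next
  case greater
  then show ?thesis
    using integral_X_nonneg_X_nonneg_less[OF assms(2) greater] by simp
qed

lemma integral_occ_time_mult_X_0:
  assumes "0 \<le> T"
  shows "(\<integral>\<omega>. occ_time X T \<omega> * nonneg_ind (X 0 \<omega>) \<partial>M) = T / 2"
proof -
  have "(\<integral>\<omega>. occ_time X T \<omega> * nonneg_ind (X 0 \<omega>) \<partial>M)
      = (\<integral>t. indicator {0..T} t * (\<integral>\<omega>. nonneg_ind (X t \<omega>) * nonneg_ind (X 0 \<omega>) \<partial>M) \<partial>lborel)"
    by (rule integral_occ_time_mult) simp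
  also have "\<dots> = (\<integral>t. indicator {0..T} t * (1 / 2) \<partial>lborel)"
  proof (rule integral_discrete_difference[where X="{0}"])
    fix t :: real
    assume "t \<notin> {0}"
    moreover have "(\<integral>\<omega>. nonneg_ind (X t \<omega>) * nonneg_ind (X 0 \<omega>) \<partial>M) = (\<integral>\<omega>. nonneg_ind (X t \<omega>) \<partial>M)"
      by (intro Bochner_Integration.integral_cong) (auto simp: X_0)
    ultimately show "indicator {0..T} t * (\<integral>\<omega>. nonneg_ind (X t \<omega>) * nonneg_ind (X 0 \<omega>) \<partial>M)
        = indicator {0..T} t * (1 / 2)"
      using integral_X_nonneg[of t] by (cases "0 < t") (auto simp: indicator_def)
  qed auto
  also have "\<dots> = T / 2"
    using assms by simp
  finally show ?thesis .
qed

lemma integral_occ_time_mult_window: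
  assumes "0 < u" "u \<le> T"
  shows "(\<integral>\<omega>. occ_time X T \<omega> * nonneg_ind (X u \<omega>) \<partial>M) = T / 4 + (\<integral>\<omega>. window_length T u (\<Theta> \<omega>) \<partial>N) / 4"
proof -
  have "(\<integral>\<omega>. occ_time X T \<omega> * nonneg_ind (X u \<omega>) \<partial>M)
      = (\<integral>t. indicator {0..T} t * (\<integral>\<omega>. nonneg_ind (X t \<omega>) * nonneg_ind (X u \<omega>) \<partial>M) \<partial>lborel)"
    using assms by (intro integral_occ_time_mult) auto
  also have "\<dots> = (\<integral>t. indicator {0..T} t * (\<integral>\<omega>. (1 + indicator {..min u t / max u t} (\<Theta> \<omega>)) / 4 \<partial>N) \<partial>lborel)"
  proof (rule integral_discrete_difference[where X="{0}"])
    fix t :: real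
    assume "t \<notin> {0}"
    then show "indicator {0..T} t * (\<integral>\<omega>. nonneg_ind (X t \<omega>) * nonneg_ind (X u \<omega>) \<partial>M)
        = indicator {0..T} t * (\<integral>\<omega>. (1 + indicator {..min u t / max u t} (\<Theta> \<omega>)) / 4 \<partial>N)"
      using integral_X_nonneg_X_nonneg[OF assms(1), of t] by (cases "0 < t") (auto simp: indicator_def)
  qed auto
  also have "\<dots> = T / 4 + (\<integral>\<omega>. window_length T u (\<Theta> \<omega>) \<partial>N) / 4"
    by (rule integral_window_Fubini[OF assms])
  finally show ?thesis .
qed

lemma integral_occ_time_mult_occ_est_eq_sum:
  assumes "0 < T" "0 < n"
  defines "\<Delta> \<equiv> T / real n"
  shows "(\<integral>\<omega>. occ_time X T \<omega> * occ_est X T n \<omega> \<partial>M)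
       = \<Delta> * (\<Sum>k<n. \<integral>\<omega>. occ_time X T \<omega> * nonneg_ind (X (\<Delta> * real k) \<omega>) \<partial>M)"
proof -
  have "0 < \<Delta>"
    using assms by (simp add: \<Delta>_def)
  have occ_est_eq: "occ_est X T n \<omega> = \<Delta> * (\<Sum>k<n. nonneg_ind (X (\<Delta> * real k) \<omega>))" for \<omega>
    unfolding occ_est_def \<Delta>_def[symmetric] by (simp add: sum.atLeast1_atMost_eq mult.commute)
  have int: "integrable M (\<lambda>\<omega>. occ_time X T \<omega> * nonneg_ind (X s \<omega>))" if "0 \<le> s" for s
  proof (rule M.integrable_const_bound[where B=T])
    show "AE \<omega> in M. norm (occ_time X T \<omega> * nonneg_ind (X s \<omega>)) \<le> T"
      using occ_time_bounds \<open>0 < T\<close> by (intro AE_I2) (auto simp: indicator_def)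
    show "(\<lambda>\<omega>. occ_time X T \<omega> * nonneg_ind (X s \<omega>)) \<in> borel_measurable M"
      using occ_time_measurable X_measurable[OF that] by measurable
  qed
  have "(\<integral>\<omega>. occ_time X T \<omega> * occ_est X T n \<omega> \<partial>M)
      = (\<integral>\<omega>. \<Delta> * (\<Sum>k<n. occ_time X T \<omega> * nonneg_ind (X (\<Delta> * real k) \<omega>)) \<partial>M)"
    by (rule Bochner_Integration.integral_cong[OF refl]) (simp only: occ_est_eq sum_distrib_left ac_simps)
  also have "\<dots> = \<Delta> * (\<integral>\<omega>. (\<Sum>k<n. occ_time X T \<omega> * nonneg_ind (X (\<Delta> * real k) \<omega>)) \<partial>M)"
    by (rule integral_mult_right_zero)
  also have "(\<integral>\<omega>. (\<Sum>k<n. occ_time X T \<omega> * nonneg_ind (X (\<Delta> * real k) \<omega>)) \<partial>M)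
      = (\<Sum>k<n. \<integral>\<omega>. occ_time X T \<omega> * nonneg_ind (X (\<Delta> * real k) \<omega>) \<partial>M)"
    by (rule Bochner_Integration.integral_sum) (use int \<open>0 < \<Delta>\<close> in simp)
  finally show ?thesis .
qed

lemma integral_occ_time_mult_occ_est:
  assumes "0 < T" "0 < n"
  defines "\<Delta> \<equiv> T / real n"
  shows "(\<integral>\<omega>. occ_time X T \<omega> * occ_est X T n \<omega> \<partial>M)
       = \<Delta> * (T / 2 + (real n - 1) * T / 4 + \<Delta> / 4 * (\<integral>\<omega>. (\<Sum>j=1..<n. window_length n (real j) (\<Theta> \<omega>)) \<partial>N))"
proof -
  have "0 < \<Delta>" "T = \<Delta> * real n"
    using assms by (auto simp: \<Delta>_def)
  define F where "F k = (\<integral>\<omega>. occ_time X T \<omega> * nonneg_ind (X (\<Delta> * real k) \<omega>) \<partial>M)" for k :: nat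
  define J where "J k = (\<integral>\<omega>. window_length n (real k) (\<Theta> \<omega>) \<partial>N)" for k :: nat
  have "(\<integral>\<omega>. occ_time X T \<omega> * occ_est X T n \<omega> \<partial>M) = \<Delta> * (\<Sum>k<n. F k)"
    unfolding F_def \<Delta>_def by (rule integral_occ_time_mult_occ_est_eq_sum[OF assms(1,2)])
  also have "(\<Sum>k<n. F k) = F 0 + (\<Sum>k=1..<n. F k)"
    using \<open>0 < n\<close> by (simp add: lessThan_atLeast0 sum.atLeast_Suc_lessThan)
  also have "F 0 = T / 2"
    using integral_occ_time_mult_X_0 \<open>0 < T\<close> by (simp add: F_def)
  also have "(\<Sum>k=1..<n. F k) = (\<Sum>k=1..<n. T / 4 + \<Delta> / 4 * J k)"
  proof (rule sum.cong[OF refl])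
    fix k
    assume "k \<in> {1..<n}"
    then have "0 < \<Delta> * real k" "\<Delta> * real k \<le> T"
      using \<open>0 < \<Delta>\<close> \<open>T = \<Delta> * real n\<close> by auto
    moreover have "window_length T (\<Delta> * real k) e = \<Delta> * window_length n k e" for e
      using window_length_mult[OF \<open>0 < \<Delta>\<close>] \<open>T = \<Delta> * real n\<close> by simp
    ultimately show "F k = T / 4 + \<Delta> / 4 * J k"
      by (simp add: F_def J_def integral_occ_time_mult_window)
  qed
  also have "\<dots> = (real n - 1) * T / 4 + \<Delta> / 4 * (\<Sum>k=1..<n. J k)"
    using \<open>0 < n\<close> by (simp add: sum.distrib sum_distrib_left of_nat_diff)
  also have "(\<Sum>k=1..<n. J k) = (\<integral>\<omega>. (\<Sum>j=1..<n. window_length n (real j) (\<Theta> \<omega>)) \<partial>N)"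
    unfolding J_def
  proof (rule Bochner_Integration.integral_sum[symmetric], rule N.integrable_window_length)
  qed (measurable, use sign_threshold_nonneg sign_threshold_less_1 in \<open>auto intro: less_imp_le\<close>)
  finally show ?thesis
    by (simp only: add.assoc)
qed

end

theorem lemma12:
  fixes M :: "'a measure" and X :: "real \<Rightarrow> 'a \<Rightarrow> real"
    and N :: "'b measure" and Z Zt :: "'b \<Rightarrow> real"
    and \<alpha> T :: real and n :: nat
  assumes "0 < \<alpha>" and "\<alpha> \<le> 2"
    and "sym_stable_levy M \<alpha> X"
    and "0 < T" and "0 < n"
    and "prob_space N"
    and "Z \<in> borel_measurable N" and "Zt \<in> borel_measurable N"
    and "prob_space.indep_var N borel Z borel Zt"
    and "\<And>u. char (distr N borel Z) u = complex_of_real (exp (- (\<bar>u\<bar> powr \<alpha>)))"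
    and "\<And>u. char (distr N borel Zt) u = complex_of_real (exp (- (\<bar>u\<bar> powr \<alpha>)))"
  shows "2 * (\<integral>\<omega>. occ_time X T \<omega> * occ_est X T n \<omega> \<partial>M)
    = 3/4 * T\<^sup>2 + 3/8 * T * (T / real n)
      - 1/8 * (T / real n)\<^sup>2 *
        (\<integral>\<omega>. (let D = 1 / (1 + \<bar>Zt \<omega> / Z \<omega>\<bar> powr \<alpha>)
               in psi (real n * D) / (D * (1 - D))) \<partial>N)"
proof -
  \<comment> \<open>\<open>\<alpha> \<le> 2\<close> is only needed for such a process to exist\<close>
  interpret stable_occupation M \<alpha> X N Z Zt
    by (intro stable_occupation.intro sym_stable_levy_process.intro iid_sym_stable.intro) (use assms in auto)
  define \<Delta> where "\<Delta> = T / real n"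
  define I where "I = (\<integral>\<omega>. (\<Sum>j=1..<n. window_length n (real j) (\<Theta> \<omega>)) \<partial>N)"
  define H where "H = (\<integral>\<omega>. (let D = 1 / (1 + \<bar>Zt \<omega> / Z \<omega>\<bar> powr \<alpha>) in psi (real n * D) / (D * (1 - D))) \<partial>N)"
  have T_eq: "T = \<Delta> * real n"
    using assms by (simp add: \<Delta>_def)
  have I_eq: "I = (2 * (real n)\<^sup>2 - n - H) / 4"
    using integral_window_sum[of n] by (simp add: I_def H_def)
  have "2 * (\<integral>\<omega>. occ_time X T \<omega> * occ_est X T n \<omega> \<partial>M) = 2 * (\<Delta> * (T / 2 + (real n - 1) * T / 4 + \<Delta> / 4 * I))"
    using integral_occ_time_mult_occ_est[OF \<open>0 < T\<close> \<open>0 < n\<close>] by (simp add: \<Delta>_def I_def)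
  also have "\<dots> = 3/4 * T\<^sup>2 + 3/8 * T * \<Delta> - 1/8 * \<Delta>\<^sup>2 * H"
    unfolding I_eq T_eq by (simp add: field_simps power2_eq_square)
  finally show ?thesis
    by (simp add: \<Delta>_def H_def)
qed

end
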